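(* For each $N$ let $\sigma_{N1}\ge\cdots\ge\sigma_{NN}>0$ satisfy $$\lim_{N\to\infty}\sigma_{N1}\Big(\sum_{n=1}^N\sigma_{Nn}^{-7}\Big)\Big(\sum_{n=1}^N\sigma_{Nn}^{-4}\Big)^{-3/2}=0,$$ let $\alpha>0$, and let $\pi$ be a probability density with $|\hat\pi(\omega)|\le C_\pi<1$ for all $|\omega|\ge2$. With $h_N=\big(\frac1\alpha\sum_{n=1}^N(2\sigma_{Nn})^{-4}\int\sin^2(t/\sigma_{Nn})\,\pi(t/\sigma_{N1})\sigma_{N1}^{-1}\,dt\big)^{-1/4}$, we have $$\lim_{N\to\infty}\max_{1\le n\le N}\frac{h_N}{\sigma_{Nn}}=\lim_{N\to\infty}\frac{h_N}{\sigma_{NN}}=0 .$$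
   Context: $\hat\pi(\omega)=\int e^{-i\omega t}\pi(t)\,dt$ is the Fourier transform of $\pi$. *)

theory Defs
  imports "HOL-Analysis.Analysis"
begin

definition fourier_transform :: "(real \<Rightarrow> real) \<Rightarrow> real \<Rightarrow> complex" where
  "fourier_transform p \<omega> =
     integral\<^sup>L lborel (\<lambda>t. exp (- (\<i> * complex_of_real (\<omega> * t))) * complex_of_real (p t))"

definition prob_density :: "(real \<Rightarrow> real) \<Rightarrow> bool" where
  "prob_density p \<longleftrightarrow> p \<in> borel_measurable borel \<and> (\<forall>t. 0 \<le> p t)
     \<and> integrable lborel p \<and> integral\<^sup>L lborel p = 1"

definition bandwidth :: "real \<Rightarrow> (real \<Rightarrow> real) \<Rightarrow> (nat \<Rightarrow> nat \<Rightarrow> real) \<Rightarrow> nat \<Rightarrow> real" where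
  "bandwidth \<alpha> p \<sigma> N =
     ((1 / \<alpha>) * (\<Sum>n = 1..N. (2 * \<sigma> N n) powr (-4) *
        integral\<^sup>L lborel (\<lambda>t. (sin (t / \<sigma> N n))\<^sup>2 * p (t / \<sigma> N 1) / \<sigma> N 1))) powr (-1/4)"

end

theory Submission
  imports Defs
begin

text \<open>
  By the double-angle formula, the n-th integral in the definition of the bandwidth equals
  (1 - Re \<pi>(2 \<sigma>_N1 / \<sigma>_Nn)) / 2 in terms of the Fourier transform \<pi> of p, and the
  frequency 2 \<sigma>_N1 / \<sigma>_Nn is at least 2, so every integral is at least (1 - C) / 2.
  Hence h_N^-4 \<ge> c T_N with c = (1 - C) / (32 \<alpha>) and T_N = \<Sum>_n \<sigma>_Nn^-4.
  Since \<sigma>_NN^-6 \<le> \<sigma>_N1 \<sigma>_NN^-7 \<le> \<sigma>_N1 \<Sum>_n \<sigma>_Nn^-7, this gives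
  (h_N / \<sigma>_NN)^6 \<le> c^(-3/2) \<sigma>_N1 (\<Sum>_n \<sigma>_Nn^-7) T_N^(-3/2), which tends to 0.
  As \<sigma>_Nn decreases in n, the maximum of h_N / \<sigma>_Nn is attained at n = N.
\<close>

lemma Re_fourier_transform:
  assumes "prob_density p"
  shows "Re (fourier_transform p \<omega>) = integral\<^sup>L lborel (\<lambda>t. cos (\<omega> * t) * p t)"
proof -
  have [measurable]: "p \<in> borel_measurable borel" and p_int: "integrable lborel p"
    using assms unfolding prob_density_def by auto
  have "integrable lborel (\<lambda>t. exp (- (\<i> * complex_of_real (\<omega> * t))) * complex_of_real (p t))"
    by (rule Bochner_Integration.integrable_bound[where f = "\<lambda>t. complex_of_real (p t)"])
       (use p_int in \<open>auto simp: norm_mult norm_exp\<close>)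
  then have "Re (fourier_transform p \<omega>)
      = integral\<^sup>L lborel (\<lambda>t. Re (exp (- (\<i> * complex_of_real (\<omega> * t))) * complex_of_real (p t)))"
    unfolding fourier_transform_def by (rule integral_bounded_linear[OF bounded_linear_Re, symmetric])
  also have "\<dots> = integral\<^sup>L lborel (\<lambda>t. cos (\<omega> * t) * p t)"
    by (simp add: Re_exp)
  finally show ?thesis .
qed

lemma integral_sin_square_scaled_density:
  assumes "prob_density p" and "a > 0" and "b > 0"
  shows "integral\<^sup>L lborel (\<lambda>t. (sin (t / b))\<^sup>2 * p (t / a) / a)
       = (1 - Re (fourier_transform p (2 * a / b))) / 2"
proof -
  have [measurable]: "p \<in> borel_measurable borel" and p_int: "integrable lborel p"
    and p_total: "integral\<^sup>L lborel p = 1"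
    using assms(1) unfolding prob_density_def by auto
  have cos_int: "integrable lborel (\<lambda>t. cos (2 * a / b * t) * p t)"
    by (rule Bochner_Integration.integrable_bound[OF p_int])
       (auto simp: abs_mult intro!: mult_left_le_one_le)
  have sin_square: "(sin (a * x / b))\<^sup>2 = (1 - cos (2 * a / b * x)) / 2" for x
    using cos_double_sin[of "a * x / b"] by (simp add: field_simps)
  have "integral\<^sup>L lborel (\<lambda>t. (sin (t / b))\<^sup>2 * p (t / a) / a)
      = \<bar>a\<bar> *\<^sub>R integral\<^sup>L lborel (\<lambda>x. (sin ((0 + a * x) / b))\<^sup>2 * p ((0 + a * x) / a) / a)"
    by (rule lborel_integral_real_affine) (use assms in simp)
  also have "\<dots> = a * integral\<^sup>L lborel (\<lambda>x. ((p x - cos (2 * a / b * x) * p x) / 2) / a)"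
    using assms(2) by (simp add: sin_square left_diff_distrib)
  also have "\<dots> = integral\<^sup>L lborel (\<lambda>x. (p x - cos (2 * a / b * x) * p x) / 2)"
    using assms(2) by simp
  also have "\<dots> = (1 - Re (fourier_transform p (2 * a / b))) / 2"
    using Bochner_Integration.integral_diff[OF p_int cos_int]
    by (simp add: Re_fourier_transform[OF assms(1)] p_total)
  finally show ?thesis .
qed

lemma integral_sin_square_scaled_density_lower:
  assumes "prob_density p" and "0 < b" and "b \<le> a"
    and ft: "\<And>\<omega>. 2 \<le> \<bar>\<omega>\<bar> \<Longrightarrow> norm (fourier_transform p \<omega>) \<le> C"
  shows "(1 - C) / 2 \<le> integral\<^sup>L lborel (\<lambda>t. (sin (t / b))\<^sup>2 * p (t / a) / a)"
proof -
  have "2 \<le> \<bar>2 * a / b\<bar>"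
    using assms(2,3) by (simp add: field_simps)
  then have "Re (fourier_transform p (2 * a / b)) \<le> C"
    using ft complex_Re_le_cmod order_trans by blast
  then have "(1 - C) / 2 \<le> (1 - Re (fourier_transform p (2 * a / b))) / 2"
    by simp
  also have "\<dots> = integral\<^sup>L lborel (\<lambda>t. (sin (t / b))\<^sup>2 * p (t / a) / a)"
    using assms(2,3) by (intro integral_sin_square_scaled_density[symmetric, OF assms(1)]) auto
  finally show ?thesis .
qed

lemma bandwidth_le:
  assumes pos: "\<And>n. 1 \<le> n \<Longrightarrow> n \<le> N \<Longrightarrow> 0 < \<sigma> N n"
    and mono: "\<And>n. 1 \<le> n \<Longrightarrow> n \<le> N \<Longrightarrow> \<sigma> N n \<le> \<sigma> N 1"
    and "1 \<le> N" and "0 < \<alpha>" and "C < 1" and "prob_density p"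
    and ft: "\<And>\<omega>. 2 \<le> \<bar>\<omega>\<bar> \<Longrightarrow> norm (fourier_transform p \<omega>) \<le> C"
  shows "bandwidth \<alpha> p \<sigma> N \<le> ((1 - C) / (32 * \<alpha>) * (\<Sum>n = 1..N. \<sigma> N n powr (-4))) powr (-1/4)"
proof -
  have "(1 - C) / (32 * \<alpha>) * (\<Sum>n = 1..N. \<sigma> N n powr (-4))
      = (1 / \<alpha>) * (\<Sum>n = 1..N. (2 * \<sigma> N n) powr (-4) * ((1 - C) / 2))"
    by (simp add: sum_distrib_left sum_divide_distrib powr_mult pos powr_minus_divide mult_ac)
  also have "\<dots> \<le> (1 / \<alpha>) * (\<Sum>n = 1..N. (2 * \<sigma> N n) powr (-4) *
        integral\<^sup>L lborel (\<lambda>t. (sin (t / \<sigma> N n))\<^sup>2 * p (t / \<sigma> N 1) / \<sigma> N 1))"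
  proof (rule mult_left_mono[OF sum_mono])
    fix n assume n: "n \<in> {1..N}"
    have "(1 - C) / 2 \<le> integral\<^sup>L lborel (\<lambda>t. (sin (t / \<sigma> N n))\<^sup>2 * p (t / \<sigma> N 1) / \<sigma> N 1)"
      using n pos mono by (intro integral_sin_square_scaled_density_lower[OF \<open>prob_density p\<close> _ _ ft]) auto
    then show "(2 * \<sigma> N n) powr (-4) * ((1 - C) / 2) \<le> (2 * \<sigma> N n) powr (-4) *
        integral\<^sup>L lborel (\<lambda>t. (sin (t / \<sigma> N n))\<^sup>2 * p (t / \<sigma> N 1) / \<sigma> N 1)"
      by (rule mult_left_mono) simp
  qed (use \<open>0 < \<alpha>\<close> in simp)
  finally have "(1 - C) / (32 * \<alpha>) * (\<Sum>n = 1..N. \<sigma> N n powr (-4)) \<le> \<dots>" .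
  moreover have "0 < (\<Sum>n = 1..N. \<sigma> N n powr (-4))"
    using pos[THEN order_less_imp_not_eq2] \<open>1 \<le> N\<close> by (intro sum_pos) auto
  ultimately show ?thesis
    unfolding bandwidth_def using \<open>0 < \<alpha>\<close> \<open>C < 1\<close> by (intro powr_mono2') auto
qed

lemma powr_quarter_div_le:
  fixes c T s s1 S :: real
  assumes "0 < c" and "0 < s" and "s \<le> s1" and "s powr -7 \<le> S" and "s powr -4 \<le> T"
  shows "(c * T) powr (-1/4) / s \<le> c powr (-1/4) * (s1 * S * T powr (-3/2)) powr (1/6)"
proof -
  have T: "0 < T"
    using assms(2,5) by (smt (verit) powr_gt_zero)
  have "(s powr -6 * T powr (-3/2)) powr (1/6) = s powr -1 * T powr (-1/4)"
    by (simp add: powr_mult powr_powr)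
  then have eq: "(c * T) powr (-1/4) / s = c powr (-1/4) * (s powr -6 * T powr (-3/2)) powr (1/6)"
    using assms(1,2) T by (simp add: powr_mult powr_neg_one)
  have "s powr -6 = s * s powr -7"
    using powr_add[of s 1 "-7"] assms(2) by simp
  also have "\<dots> \<le> s1 * S"
    using assms(2-4) by (intro mult_mono) auto
  finally have "(s powr -6 * T powr (-3/2)) powr (1/6) \<le> (s1 * S * T powr (-3/2)) powr (1/6)"
    by (intro powr_mono2 mult_right_mono) auto
  then show ?thesis
    unfolding eq using assms(1) by (simp add: mult_left_mono)
qed

lemma Max_div_antimono_eq:
  fixes s :: "nat \<Rightarrow> real"
  assumes "1 \<le> N" and "0 \<le> h"
    and "\<And>n. 1 \<le> n \<Longrightarrow> n \<le> N \<Longrightarrow> 0 < s n \<and> s N \<le> s n"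
  shows "Max ((\<lambda>n. h / s n) ` {1..N}) = h / s N"
  using assms by (intro Max_eqI) (auto intro!: divide_left_mono)

theorem mainTheorem12:
  fixes \<sigma> :: "nat \<Rightarrow> nat \<Rightarrow> real" and \<alpha> C :: real and p :: "real \<Rightarrow> real"
  assumes pos: "\<And>N n. 1 \<le> n \<Longrightarrow> n \<le> N \<Longrightarrow> 0 < \<sigma> N n"
    and mono: "\<And>N n m. 1 \<le> n \<Longrightarrow> n \<le> m \<Longrightarrow> m \<le> N \<Longrightarrow> \<sigma> N m \<le> \<sigma> N n"
    and lim: "(\<lambda>N. \<sigma> N 1 * (\<Sum>n = 1..N. \<sigma> N n powr (-7))
                 * (\<Sum>n = 1..N. \<sigma> N n powr (-4)) powr (-3/2)) \<longlonglongrightarrow> 0"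
    and alpha: "0 < \<alpha>"
    and dens: "prob_density p"
    and C: "C < 1"
    and ft: "\<And>\<omega>. 2 \<le> \<bar>\<omega>\<bar> \<Longrightarrow> norm (fourier_transform p \<omega>) \<le> C"
  shows "(\<lambda>N. Max ((\<lambda>n. bandwidth \<alpha> p \<sigma> N / \<sigma> N n) ` {1..N})) \<longlonglongrightarrow> 0
       \<and> (\<lambda>N. bandwidth \<alpha> p \<sigma> N / \<sigma> N N) \<longlonglongrightarrow> 0"
proof -
  define c where "c = (1 - C) / (32 * \<alpha>)"
  define X where "X N = \<sigma> N 1 * (\<Sum>n = 1..N. \<sigma> N n powr (-7))
                 * (\<Sum>n = 1..N. \<sigma> N n powr (-4)) powr (-3/2)" for N
  have "0 < c"
    using C alpha by (simp add: c_def)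
  have bound: "0 \<le> bandwidth \<alpha> p \<sigma> N / \<sigma> N N
      \<and> bandwidth \<alpha> p \<sigma> N / \<sigma> N N \<le> c powr (-1/4) * X N powr (1/6)" if "1 \<le> N" for N
  proof -
    have "bandwidth \<alpha> p \<sigma> N / \<sigma> N N \<le> (c * (\<Sum>n = 1..N. \<sigma> N n powr (-4))) powr (-1/4) / \<sigma> N N"
      using bandwidth_le[of N \<sigma>, OF _ _ that alpha C dens ft] pos mono pos[OF that order_refl]
      unfolding c_def by (simp add: divide_right_mono)
    also have "\<dots> \<le> c powr (-1/4) * X N powr (1/6)"
      unfolding X_def using \<open>0 < c\<close> pos mono that
      by (intro powr_quarter_div_le member_le_sum) auto
    finally show ?thesis
      using pos[OF that order_refl] by (simp add: bandwidth_def)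
  qed
  have "0 \<le> X N" if "1 \<le> N" for N
    unfolding X_def using pos[OF order_refl that] pos by (intro mult_nonneg_nonneg sum_nonneg) auto
  then have "(\<lambda>N. c powr (-1/4) * X N powr (1/6)) \<longlonglongrightarrow> 0"
    by (intro tendsto_mult_right_zero tendsto_zero_powrI[OF lim[folded X_def]]
        eventually_sequentiallyI[of 1]) auto
  then have "(\<lambda>N. bandwidth \<alpha> p \<sigma> N / \<sigma> N N) \<longlonglongrightarrow> 0"
    by (rule tendsto_sandwich[OF _ _ tendsto_const, rotated 2])
      (use bound in \<open>auto intro!: eventually_sequentiallyI[of 1]\<close>)
  moreover have "bandwidth \<alpha> p \<sigma> N / \<sigma> N N = Max ((\<lambda>n. bandwidth \<alpha> p \<sigma> N / \<sigma> N n) ` {1..N})"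
    if "1 \<le> N" for N
    using pos mono[of _ N N] that by (intro Max_div_antimono_eq[symmetric]) (auto simp: bandwidth_def)
  ultimately show ?thesis
    by (metis (mono_tags, lifting) Lim_transform_eventually eventually_sequentiallyI)
qed

end
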